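(* Let $\mathcal{T}$ be a smooth manifold with local coordinates $(t^a)$ carrying a Riemannian metric $h_{ab}(t)$ with Christoffel symbols $\chi^a_{bc}(t)$, and let $M$ be a smooth $n$-dimensional manifold with local coordinates $(x^i)$ carrying a semi-Riemannian metric $\varphi_{ij}(x)$ with Christoffel symbols $\gamma^k_{ij}(x)$. Let $m\neq0$, $e$ be real constants and $A^{(a)}_{(i)}(t,x)$ a smooth d-tensor on $\mathcal{T}\times M$. On $E^*=J^{1*}(\mathcal{T},M)$, with coordinates $(t^a,x^i,p^a_i)$, let $\frac{\delta}{\delta t^a}=\frac{\partial}{\partial t^a}-\chi^f_{ag}p^g_r\frac{\partial}{\partial p^f_r}$ and $\frac{\delta}{\delta x^i}=\frac{\partial}{\partial x^i}-\underset{2}{N}{}^{(f)}_{(r)i}\frac{\partial}{\partial p^f_r}$ with $\underset{2}{N}{}^{(f)}_{(r)i}=\gamma^s_{ri}\big[\frac{2e}{m}A^{(f)}_{(s)}-p^f_s\big]-\frac{e}{m}\big[\frac{\partial A^{(f)}_{(r)}}{\partial x^i}+\frac{\partial A^{(f)}_{(i)}}{\partial x^r}\big]$. Let $D$ be the linear connection on $E^*$ defined on the adapted frame $\{\frac{\delta}{\delta t^a},\frac{\delta}{\delta x^i},\frac{\partial}{\partial p^a_i}\}$ by \[ D_{\frac{\delta}{\delta t^c}}\tfrac{\delta}{\delta t^b}=\chi^a_{bc}\tfrac{\delta}{\delta t^a},\quad D_{\frac{\delta}{\delta t^c}}\tfrac{\delta}{\delta x^j}=0,\quad D_{\frac{\delta}{\delta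 t^c}}\tfrac{\partial}{\partial p^f_j}=\chi^b_{fc}\tfrac{\partial}{\partial p^b_j}, \] \[ D_{\frac{\delta}{\delta x^k}}\tfrac{\delta}{\delta t^b}=0,\quad D_{\frac{\delta}{\delta x^k}}\tfrac{\delta}{\delta x^j}=\gamma^i_{jk}\tfrac{\delta}{\delta x^i},\quad D_{\frac{\delta}{\delta x^k}}\tfrac{\partial}{\partial p^b_s}=-\gamma^s_{ik}\tfrac{\partial}{\partial p^b_i}, \] and $D_{\frac{\partial}{\partial p^c_k}}$ of every adapted frame vector equal to $0$. Let $R(X,Y)Z=D_XD_YZ-D_YD_XZ-D_{[X,Y]}Z$ and $\mathrm{Ric}(Y,Z)=\mathrm{tr}(X\mapsto R(X,Y)Z)$. Then the only (possibly) nonvanishing adapted components of $\mathrm{Ric}$ are \[ \mathrm{Ric}\big(\tfrac{\delta}{\delta t^a},\tfrac{\delta}{\delta t^b}\big)=\chi_{ab},\qquad \mathrm{Ric}\big(\tfrac{\delta}{\delta x^i},\tfrac{\delta}{\delta x^j}\big)=\mathfrak{R}_{ij}, \] where $\chi_{ab}(t)$ and $\mathfrak{R}_{ij}(x)$ are the classical Ricci tensors of $h_{ab}$ and $\varphi_{ij}$ (defined with the same curvature and trace conventions for their Levi-Civita connections); all adapted components of $\mathrm{Ric}$ involving a vertical vector $\frac{\partial}{\partial p^a_i}$ or mixing $\frac{\delta}{\delta t^a}$ with $\frac{\delta}{\delta x^i}$ vanish.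
   Context: Indices $a,b,c,d,f,g$ run from $1$ to $\dim\mathcal{T}$, indices $i,j,k,r,s$ from $1$ to $n$; Einstein summation convention. The fibre coordinates of $J^{1*}(\mathcal{T},M)$ transform as $\tilde p^a_i=\frac{\partial \tilde t^a}{\partial t^b}\frac{\partial x^j}{\partial \tilde x^i}p^b_j$. The connection $D$ is the one the paper calls the generalized Cartan canonical connection $C\Gamma(N)=(\chi^a_{bc},0,\gamma^i_{jk},0)$ of the autonomous multi-time Hamilton space of electrodynamics, and $\mathrm{Ric}$ is its Ricci tensor. *)

theory Defs
  imports "HOL-Analysis.Analysis"
begin

(* ---------------------------------------------------------------------
   Local-coordinate setting.
   'a : index type of the time coordinates t^a   (dim T = CARD('a))
   'i : index type of the space coordinates x^i  (n = CARD('i))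
   A point of E* = J^{1*}(T,M) over a chart is z = (t, x, p) with
   p $ a $ i = p^a_i.  Tangent vectors are elements of the same space.
   Adapted frame index:
     Inl a            ~  delta/delta t^a
     Inr (Inl i)      ~  delta/delta x^i
     Inr (Inr (a,i))  ~  partial/partial p^a_i
   --------------------------------------------------------------------- *)

type_synonym ('a,'i) pt = "(real^'a) \<times> (real^'i) \<times> (real^'i^'a)"
type_synonym ('a,'i) fidx = "'a + 'i + ('a \<times> 'i)"

fun Ck_on :: "nat \<Rightarrow> 'v::euclidean_space set \<Rightarrow> ('v \<Rightarrow> real) \<Rightarrow> bool" where
  "Ck_on 0 S f = continuous_on S f"
| "Ck_on (Suc k) S f = (f differentiable_on S \<and>
       (\<forall>v. Ck_on k S (\<lambda>z. frechet_derivative f (at z) v)))"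

definition smooth_on :: "'v::euclidean_space set \<Rightarrow> ('v \<Rightarrow> real) \<Rightarrow> bool" where
  "smooth_on S f \<longleftrightarrow> (\<forall>k. Ck_on k S f)"

definition pdir :: "('v::real_normed_vector \<Rightarrow> real) \<Rightarrow> 'v \<Rightarrow> 'v \<Rightarrow> real" where
  "pdir g z v = deriv (\<lambda>s. g (z + s *\<^sub>R v)) 0"

definition pd :: "(real^'n \<Rightarrow> real) \<Rightarrow> real^'n \<Rightarrow> 'n \<Rightarrow> real" where
  "pd f u k = pdir f u (axis k 1)"

(* Christoffel symbols Gamma^a_{bc} of a metric g (g a b u = g_{ab}(u)) *)
definition christoffel ::
  "('n::finite \<Rightarrow> 'n \<Rightarrow> real^'n \<Rightarrow> real) \<Rightarrow> 'n \<Rightarrow> 'n \<Rightarrow> 'n \<Rightarrow> real^'n \<Rightarrow> real" where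
  "christoffel g a b c u = 1/2 * (\<Sum>d\<in>UNIV. matrix_inv (\<chi> i j. g i j u) $ a $ d *
       (pd (g d c) u b + pd (g d b) u c - pd (g b c) u d))"

definition riemannian_metric :: "(real^'n) set \<Rightarrow> ('n::finite \<Rightarrow> 'n \<Rightarrow> real^'n \<Rightarrow> real) \<Rightarrow> bool" where
  "riemannian_metric U g \<longleftrightarrow> open U \<and> (\<forall>a b. smooth_on U (g a b)) \<and>
     (\<forall>u\<in>U. \<forall>a b. g a b u = g b a u) \<and>
     (\<forall>u\<in>U. \<forall>v::real^'n. v \<noteq> 0 \<longrightarrow> (\<Sum>a\<in>UNIV. \<Sum>b\<in>UNIV. g a b u * v$a * v$b) > 0)"

definition semi_riemannian_metric :: "(real^'n) set \<Rightarrow> ('n::finite \<Rightarrow> 'n \<Rightarrow> real^'n \<Rightarrow> real) \<Rightarrow> bool" where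
  "semi_riemannian_metric V g \<longleftrightarrow> open V \<and> (\<forall>a b. smooth_on V (g a b)) \<and>
     (\<forall>u\<in>V. \<forall>a b. g a b u = g b a u) \<and>
     (\<forall>u\<in>V. det (\<chi> i j. g i j u) \<noteq> 0)"

(* classical Ricci tensor Ric_{ab} = Ric(d_a, d_b) of the connection with
   nabla_{d_c} d_b = Chr a b c d_a, using R(X,Y)Z = D_X D_Y Z - D_Y D_X Z - D_[X,Y] Z
   and Ric(Y,Z) = tr(X |-> R(X,Y)Z) *)
definition ricci_tensor ::
  "('n::finite \<Rightarrow> 'n \<Rightarrow> 'n \<Rightarrow> real^'n \<Rightarrow> real) \<Rightarrow> real^'n \<Rightarrow> 'n \<Rightarrow> 'n \<Rightarrow> real" where
  "ricci_tensor Chr u a b = (\<Sum>c\<in>UNIV. pd (Chr c b a) u c - pd (Chr c b c) u a +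
       (\<Sum>e\<in>UNIV. Chr e b a u * Chr c e c u - Chr e b c u * Chr c e a u))"

(* M^{(f)}_{(r)b} = chi^f_{bg} p^g_r  (time part of the nonlinear connection) *)
definition Mcoef :: "('a::finite \<Rightarrow> 'a \<Rightarrow> 'a \<Rightarrow> real^'a \<Rightarrow> real) \<Rightarrow> 'a \<Rightarrow> 'i::finite \<Rightarrow> 'a \<Rightarrow> ('a,'i) pt \<Rightarrow> real" where
  "Mcoef chi f r b z = (\<Sum>g\<in>UNIV. chi f b g (fst z) * snd (snd z) $ g $ r)"

definition Ncoef :: "('i::finite \<Rightarrow> 'i \<Rightarrow> 'i \<Rightarrow> real^'i \<Rightarrow> real) \<Rightarrow>
    ('a::finite \<Rightarrow> 'i \<Rightarrow> real^'a \<Rightarrow> real^'i \<Rightarrow> real) \<Rightarrow> real \<Rightarrow> real \<Rightarrow>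
    'a \<Rightarrow> 'i \<Rightarrow> 'i \<Rightarrow> ('a,'i) pt \<Rightarrow> real" where
  "Ncoef gam A e m f r i z =
     (let t = fst z; x = fst (snd z); p = snd (snd z) in
      (\<Sum>s\<in>UNIV. gam s r i x * (2 * e / m * A f s t x - p $ f $ s))
      - e / m * (pd (A f r t) x i + pd (A f i t) x r))"

definition frame :: "('a::finite \<Rightarrow> 'a \<Rightarrow> 'a \<Rightarrow> real^'a \<Rightarrow> real) \<Rightarrow>
    ('i::finite \<Rightarrow> 'i \<Rightarrow> 'i \<Rightarrow> real^'i \<Rightarrow> real) \<Rightarrow>
    ('a \<Rightarrow> 'i \<Rightarrow> real^'a \<Rightarrow> real^'i \<Rightarrow> real) \<Rightarrow> real \<Rightarrow> real \<Rightarrow>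
    ('a,'i) fidx \<Rightarrow> ('a,'i) pt \<Rightarrow> ('a,'i) pt" where
  "frame chi gam A e m \<beta> z = (case \<beta> of
      Inl a \<Rightarrow> (axis a 1, 0, \<chi> f r. - Mcoef chi f r a z)
    | Inr (Inl i) \<Rightarrow> (0, axis i 1, \<chi> f r. - Ncoef gam A e m f r i z)
    | Inr (Inr (f, r)) \<Rightarrow> (0, 0, axis f (axis r 1)))"

(* the dual adapted coframe {dt^a, dx^i, delta p^a_i}: components of a tangent
   vector v at z with respect to the adapted frame *)
definition coframe :: "('a::finite \<Rightarrow> 'a \<Rightarrow> 'a \<Rightarrow> real^'a \<Rightarrow> real) \<Rightarrow>
    ('i::finite \<Rightarrow> 'i \<Rightarrow> 'i \<Rightarrow> real^'i \<Rightarrow> real) \<Rightarrow>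
    ('a \<Rightarrow> 'i \<Rightarrow> real^'a \<Rightarrow> real^'i \<Rightarrow> real) \<Rightarrow> real \<Rightarrow> real \<Rightarrow>
    ('a,'i) pt \<Rightarrow> ('a,'i) pt \<Rightarrow> ('a,'i) fidx \<Rightarrow> real" where
  "coframe chi gam A e m z v \<beta> = (case \<beta> of
      Inl a \<Rightarrow> fst v $ a
    | Inr (Inl i) \<Rightarrow> fst (snd v) $ i
    | Inr (Inr (f, r)) \<Rightarrow> snd (snd v) $ f $ r
          + (\<Sum>b\<in>UNIV. fst v $ b * Mcoef chi f r b z)
          + (\<Sum>j\<in>UNIV. fst (snd v) $ j * Ncoef gam A e m f r j z))"

(* connection coefficients: conn chi gam z beta gamma delta is the
   delta-component of D_{E_beta} E_gamma (generalized Cartan canonical connection) *)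
definition conn :: "('a::finite \<Rightarrow> 'a \<Rightarrow> 'a \<Rightarrow> real^'a \<Rightarrow> real) \<Rightarrow>
    ('i::finite \<Rightarrow> 'i \<Rightarrow> 'i \<Rightarrow> real^'i \<Rightarrow> real) \<Rightarrow>
    ('a,'i) pt \<Rightarrow> ('a,'i) fidx \<Rightarrow> ('a,'i) fidx \<Rightarrow> ('a,'i) fidx \<Rightarrow> real" where
  "conn chi gam z \<beta> \<gamma> \<delta> = (case \<beta> of
      Inl c \<Rightarrow>
        (case \<gamma> of
           Inl b \<Rightarrow> (case \<delta> of Inl a \<Rightarrow> chi a b c (fst z) | _ \<Rightarrow> 0)
         | Inr (Inl j) \<Rightarrow> 0
         | Inr (Inr (f, j)) \<Rightarrow>
             (case \<delta> of Inr (Inr (b, j')) \<Rightarrow> (if j' = j then chi b f c (fst z) else 0)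
                     | _ \<Rightarrow> 0))
    | Inr (Inl k) \<Rightarrow>
        (case \<gamma> of
           Inl b \<Rightarrow> 0
         | Inr (Inl j) \<Rightarrow> (case \<delta> of Inr (Inl i) \<Rightarrow> gam i j k (fst (snd z)) | _ \<Rightarrow> 0)
         | Inr (Inr (b, s)) \<Rightarrow>
             (case \<delta> of Inr (Inr (b', i)) \<Rightarrow> (if b' = b then - gam s i k (fst (snd z)) else 0)
                     | _ \<Rightarrow> 0))
    | Inr (Inr _) \<Rightarrow> 0)"

(* D_X Y for vector fields X, Y on E*, extending the frame values by
   linearity and the Leibniz rule *)
definition covD :: "('a::finite \<Rightarrow> 'a \<Rightarrow> 'a \<Rightarrow> real^'a \<Rightarrow> real) \<Rightarrow>
    ('i::finite \<Rightarrow> 'i \<Rightarrow> 'i \<Rightarrow> real^'i \<Rightarrow> real) \<Rightarrow>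
    ('a \<Rightarrow> 'i \<Rightarrow> real^'a \<Rightarrow> real^'i \<Rightarrow> real) \<Rightarrow> real \<Rightarrow> real \<Rightarrow>
    (('a,'i) pt \<Rightarrow> ('a,'i) pt) \<Rightarrow> (('a,'i) pt \<Rightarrow> ('a,'i) pt) \<Rightarrow> ('a,'i) pt \<Rightarrow> ('a,'i) pt" where
  "covD chi gam A e m X Y z =
     (\<Sum>\<delta>\<in>UNIV. (pdir (\<lambda>w. coframe chi gam A e m w (Y w) \<delta>) z (X z)
        + (\<Sum>\<beta>\<in>UNIV. \<Sum>\<gamma>\<in>UNIV. coframe chi gam A e m z (X z) \<beta> *
              coframe chi gam A e m z (Y z) \<gamma> * conn chi gam z \<beta> \<gamma> \<delta>))
      *\<^sub>R frame chi gam A e m \<delta> z)"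

definition lie :: "(('a::finite,'i::finite) pt \<Rightarrow> ('a,'i) pt) \<Rightarrow> (('a,'i) pt \<Rightarrow> ('a,'i) pt) \<Rightarrow>
    ('a,'i) pt \<Rightarrow> ('a,'i) pt" where
  "lie X Y z =
     ((\<chi> a. pdir (\<lambda>w. fst (Y w) $ a) z (X z) - pdir (\<lambda>w. fst (X w) $ a) z (Y z)),
      (\<chi> i. pdir (\<lambda>w. fst (snd (Y w)) $ i) z (X z) - pdir (\<lambda>w. fst (snd (X w)) $ i) z (Y z)),
      (\<chi> f r. pdir (\<lambda>w. snd (snd (Y w)) $ f $ r) z (X z)
             - pdir (\<lambda>w. snd (snd (X w)) $ f $ r) z (Y z)))"

definition curv :: "('a::finite \<Rightarrow> 'a \<Rightarrow> 'a \<Rightarrow> real^'a \<Rightarrow> real) \<Rightarrow>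
    ('i::finite \<Rightarrow> 'i \<Rightarrow> 'i \<Rightarrow> real^'i \<Rightarrow> real) \<Rightarrow>
    ('a \<Rightarrow> 'i \<Rightarrow> real^'a \<Rightarrow> real^'i \<Rightarrow> real) \<Rightarrow> real \<Rightarrow> real \<Rightarrow>
    (('a,'i) pt \<Rightarrow> ('a,'i) pt) \<Rightarrow> (('a,'i) pt \<Rightarrow> ('a,'i) pt) \<Rightarrow> (('a,'i) pt \<Rightarrow> ('a,'i) pt) \<Rightarrow>
    ('a,'i) pt \<Rightarrow> ('a,'i) pt" where
  "curv chi gam A e m X Y Z z =
     covD chi gam A e m X (covD chi gam A e m Y Z) z
     - covD chi gam A e m Y (covD chi gam A e m X Z) z
     - covD chi gam A e m (lie X Y) Z z"

definition ric :: "('a::finite \<Rightarrow> 'a \<Rightarrow> 'a \<Rightarrow> real^'a \<Rightarrow> real) \<Rightarrow>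
    ('i::finite \<Rightarrow> 'i \<Rightarrow> 'i \<Rightarrow> real^'i \<Rightarrow> real) \<Rightarrow>
    ('a \<Rightarrow> 'i \<Rightarrow> real^'a \<Rightarrow> real^'i \<Rightarrow> real) \<Rightarrow> real \<Rightarrow> real \<Rightarrow>
    (('a,'i) pt \<Rightarrow> ('a,'i) pt) \<Rightarrow> (('a,'i) pt \<Rightarrow> ('a,'i) pt) \<Rightarrow> ('a,'i) pt \<Rightarrow> real" where
  "ric chi gam A e m Y Z z =
     (\<Sum>\<alpha>\<in>UNIV. coframe chi gam A e m z
        (curv chi gam A e m (frame chi gam A e m \<alpha>) Y Z z) \<alpha>)"

end

theory Submission
  imports Defs
begin

(* In the adapted frame the connection coefficients depend only on (t, x), vanish in the
   vertical directions and are block diagonal with blocks chi and gam. The horizontal parts of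
   the frame fields are constant coordinate vectors, so the bracket of two frame fields is
   vertical and D_[X,Y] drops out of the curvature. In the resulting frame formula for
   Ric(E_beta, E_gamma) the vertical alpha contribute nothing, the horizontal frame vectors act on
   functions of (t, x) as the coordinate partials, and the sum splits into the classical Ricci
   tensors of chi and gam. *)

lemma sum_UNIV_Plus:
  fixes f :: "'x::finite + 'y::finite \<Rightarrow> 'c::comm_monoid_add"
  shows "(\<Sum>u\<in>UNIV. f u) = (\<Sum>x\<in>UNIV. f (Inl x)) + (\<Sum>y\<in>UNIV. f (Inr y))"
  using sum.Plus[of "UNIV::'x set" "UNIV::'y set" f] by (simp add: comp_def)

lemma adapted_index_cases:
  fixes \<beta> :: "('a, 'i) fidx"
  obtains a where "\<beta> = Inl a" | i where "\<beta> = Inr (Inl i)" | q where "\<beta> = Inr (Inr q)"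
  by (metis sum.exhaust)

locale cartan_canonical_connection =
  fixes chi :: "'a::finite \<Rightarrow> 'a \<Rightarrow> 'a \<Rightarrow> real^'a \<Rightarrow> real"
    and gam :: "'i::finite \<Rightarrow> 'i \<Rightarrow> 'i \<Rightarrow> real^'i \<Rightarrow> real"
    and A :: "'a \<Rightarrow> 'i \<Rightarrow> real^'a \<Rightarrow> real^'i \<Rightarrow> real"
    and e m :: real
begin

abbreviation E :: "('a, 'i) fidx \<Rightarrow> ('a, 'i) pt \<Rightarrow> ('a, 'i) pt"
  where "E \<equiv> frame chi gam A e m"
abbreviation \<theta> :: "('a, 'i) pt \<Rightarrow> ('a, 'i) pt \<Rightarrow> ('a, 'i) fidx \<Rightarrow> real"
  where "\<theta> \<equiv> coframe chi gam A e m"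
abbreviation D ::
    "(('a, 'i) pt \<Rightarrow> ('a, 'i) pt) \<Rightarrow> (('a, 'i) pt \<Rightarrow> ('a, 'i) pt) \<Rightarrow> ('a, 'i) pt \<Rightarrow> ('a, 'i) pt"
  where "D \<equiv> covD chi gam A e m"
abbreviation \<Gamma> :: "('a, 'i) pt \<Rightarrow> ('a, 'i) fidx \<Rightarrow> ('a, 'i) fidx \<Rightarrow> ('a, 'i) fidx \<Rightarrow> real"
  where "\<Gamma> \<equiv> conn chi gam"

lemma linear_coframe: "linear (\<lambda>v. \<theta> z v \<gamma>)"
  by (rule linearI)
    (auto simp: coframe_def algebra_simps sum.distrib sum_distrib_left split: sum.splits prod.splits)

lemma coframe_frame: "\<theta> z (E \<delta> z) \<gamma> = (if \<gamma> = \<delta> then 1 else 0)"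
  by (auto simp: coframe_def frame_def axis_def if_distrib[of "\<lambda>x. x * _"] cong: if_cong
      split: sum.splits prod.splits)

lemma coframe_frame_combination: "\<theta> z (\<Sum>\<delta>\<in>UNIV. c \<delta> *\<^sub>R E \<delta> z) \<gamma> = c \<gamma>"
  by (simp add: linear_sum[OF linear_coframe] linear_scale[OF linear_coframe] comp_def
      coframe_frame if_distrib[of "\<lambda>x. _ * x"] cong: if_cong)

lemma pdir_const: "pdir (\<lambda>w. c) z v = 0"
  by (simp add: pdir_def)

lemma covD_frame_left:
  "D (E \<alpha>) Y z = (\<Sum>\<delta>\<in>UNIV. (pdir (\<lambda>w. \<theta> w (Y w) \<delta>) z (E \<alpha> z)
      + (\<Sum>\<gamma>\<in>UNIV. \<theta> z (Y z) \<gamma> * \<Gamma> z \<alpha> \<gamma> \<delta>)) *\<^sub>R E \<delta> z)"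
  unfolding covD_def
  by (simp add: coframe_frame if_distrib[of "\<lambda>x. x * _"] sum.swap[of _ "UNIV::('a, 'i) fidx set"]
      cong: if_cong)

lemma covD_frame_frame: "D (E \<alpha>) (E \<gamma>) z = (\<Sum>\<delta>\<in>UNIV. \<Gamma> z \<alpha> \<gamma> \<delta> *\<^sub>R E \<delta> z)"
  unfolding covD_frame_left
  by (simp add: coframe_frame pdir_const if_distrib[of "\<lambda>x. x * _"] cong: if_cong)

lemma covD_frame_covD_frame_frame:
  "D (E \<alpha>) (D (E \<beta>) (E \<gamma>)) z = (\<Sum>\<delta>\<in>UNIV. (pdir (\<lambda>w. \<Gamma> w \<beta> \<gamma> \<delta>) z (E \<alpha> z)
      + (\<Sum>\<epsilon>\<in>UNIV. \<Gamma> z \<beta> \<gamma> \<epsilon> * \<Gamma> z \<alpha> \<epsilon> \<delta>)) *\<^sub>R E \<delta> z)"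
  unfolding covD_frame_left[of \<alpha>] covD_frame_frame coframe_frame_combination ..

lemma frame_horizontal_components:
  "fst (E \<beta> z) = (case \<beta> of Inl a \<Rightarrow> axis a 1 | Inr _ \<Rightarrow> 0)"
  "fst (snd (E \<beta> z)) = (case \<beta> of Inr (Inl i) \<Rightarrow> axis i 1 | _ \<Rightarrow> 0)"
  by (simp_all add: frame_def split: sum.splits prod.splits)

lemma lie_frame_frame_vertical:
  "fst (lie (E \<alpha>) (E \<beta>) z) = 0" "fst (snd (lie (E \<alpha>) (E \<beta>) z)) = 0"
  by (simp_all add: lie_def frame_horizontal_components pdir_const vec_eq_iff)

lemma conn_vertical_direction: "\<Gamma> z (Inr (Inr q)) \<gamma> \<delta> = 0"
  by (simp add: conn_def)

lemma covD_lie_frame_frame: "D (lie (E \<alpha>) (E \<beta>)) (E \<gamma>) z = 0"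
proof -
  have vanishing_terms: "\<theta> z (lie (E \<alpha>) (E \<beta>) z) \<beta>' * c * \<Gamma> z \<beta>' \<gamma>' \<delta> = 0" for \<beta>' \<gamma>' \<delta> c
    by (cases \<beta>' rule: adapted_index_cases)
      (simp_all add: coframe_def lie_frame_frame_vertical conn_vertical_direction)
  show ?thesis
    unfolding covD_def by (simp add: coframe_frame pdir_const vanishing_terms)
qed

lemma ric_frame_frame:
  "ric chi gam A e m (E \<beta>) (E \<gamma>) z =
    (\<Sum>\<alpha>\<in>UNIV. pdir (\<lambda>w. \<Gamma> w \<beta> \<gamma> \<alpha>) z (E \<alpha> z) - pdir (\<lambda>w. \<Gamma> w \<alpha> \<gamma> \<alpha>) z (E \<beta> z)
      + (\<Sum>\<epsilon>\<in>UNIV. \<Gamma> z \<beta> \<gamma> \<epsilon> * \<Gamma> z \<alpha> \<epsilon> \<alpha> - \<Gamma> z \<alpha> \<gamma> \<epsilon> * \<Gamma> z \<beta> \<epsilon> \<alpha>))"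
  unfolding ric_def curv_def covD_lie_frame_frame covD_frame_covD_frame_frame diff_zero
    linear_diff[OF linear_coframe] coframe_frame_combination
  by (intro sum.cong) (simp_all add: sum_subtractf)

lemma conn_cong_base:
  assumes "fst w = fst w'" and "fst (snd w) = fst (snd w')"
  shows "\<Gamma> w \<beta> \<gamma> \<delta> = \<Gamma> w' \<beta> \<gamma> \<delta>"
  unfolding conn_def assms ..

lemma pdir_conn_vertical: "pdir (\<lambda>w. \<Gamma> w \<beta> \<gamma> \<delta>) z (E (Inr (Inr q)) z) = 0"
proof -
  have "\<Gamma> (z + s *\<^sub>R E (Inr (Inr q)) z) \<beta> \<gamma> \<delta> = \<Gamma> z \<beta> \<gamma> \<delta>" for s
    by (rule conn_cong_base) (simp_all add: frame_horizontal_components)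
  then show ?thesis by (simp add: pdir_def)
qed

lemma pdir_frame_time:
  "pdir (\<lambda>w. F (fst w)) z (E \<beta> z) = (case \<beta> of Inl c \<Rightarrow> pd F (fst z) c | Inr _ \<Rightarrow> 0)"
  by (simp add: pdir_def pd_def frame_horizontal_components split: sum.splits)

lemma pdir_frame_space:
  "pdir (\<lambda>w. F (fst (snd w))) z (E \<beta> z) =
    (case \<beta> of Inr (Inl k) \<Rightarrow> pd F (fst (snd z)) k | _ \<Rightarrow> 0)"
  by (simp add: pdir_def pd_def frame_horizontal_components split: sum.splits)

lemma conn_adapted_components:
  "\<Gamma> z (Inl c) (Inl b) (Inl a) = chi a b c (fst z)"
  "\<Gamma> z (Inr (Inl k)) (Inr (Inl j)) (Inr (Inl i)) = gam i j k (fst (snd z))"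
  "\<Gamma> z (Inl c) (Inr (Inl j)) \<delta> = 0"
  "\<Gamma> z (Inr (Inl k)) (Inl b) \<delta> = 0"
  "\<Gamma> z \<beta> (Inl b) (Inr \<delta>') = 0"
  "\<Gamma> z \<beta> (Inr (Inl j)) (Inl a) = 0"
  "\<Gamma> z \<beta> (Inr (Inl j)) (Inr (Inr q)) = 0"
  "\<Gamma> z \<beta> (Inr (Inr q)) (Inl a) = 0"
  "\<Gamma> z \<beta> (Inr (Inr q)) (Inr (Inl i)) = 0"
  by (simp_all add: conn_def split: sum.splits prod.splits)

lemma ric_adapted_frame:
  "ric chi gam A e m (E \<beta>) (E \<gamma>) z =
    (case (\<beta>, \<gamma>) of
       (Inl a, Inl b) \<Rightarrow> ricci_tensor chi (fst z) a b
     | (Inr (Inl i), Inr (Inl j)) \<Rightarrow> ricci_tensor gam (fst (snd z)) i j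
     | _ \<Rightarrow> 0)"
  by (cases \<beta> rule: adapted_index_cases; cases \<gamma> rule: adapted_index_cases)
    (simp_all add: ric_frame_frame sum_UNIV_Plus conn_adapted_components conn_vertical_direction
      pdir_conn_vertical pdir_frame_time pdir_frame_space pdir_const ricci_tensor_def
      sum.distrib sum_subtractf)

end

theorem mainTheorem3:
  fixes U :: "(real^'a::finite) set" and V :: "(real^'i::finite) set"
    and h :: "'a \<Rightarrow> 'a \<Rightarrow> real^'a \<Rightarrow> real"
    and \<phi> :: "'i \<Rightarrow> 'i \<Rightarrow> real^'i \<Rightarrow> real"
    and chi :: "'a \<Rightarrow> 'a \<Rightarrow> 'a \<Rightarrow> real^'a \<Rightarrow> real"
    and gam :: "'i \<Rightarrow> 'i \<Rightarrow> 'i \<Rightarrow> real^'i \<Rightarrow> real"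
    and A :: "'a \<Rightarrow> 'i \<Rightarrow> real^'a \<Rightarrow> real^'i \<Rightarrow> real"
    and m e :: real
  assumes h_metric: "riemannian_metric U h"
    and chi_def: "\<forall>t\<in>U. \<forall>a b c. chi a b c t = christoffel h a b c t"
    and phi_metric: "semi_riemannian_metric V \<phi>"
    and gam_def: "\<forall>x\<in>V. \<forall>i j k. gam i j k x = christoffel \<phi> i j k x"
    and m_nz: "m \<noteq> 0"
    and A_smooth: "\<forall>a i. smooth_on (U \<times> V) (\<lambda>(t, x). A a i t x)"
  shows "\<forall>t\<in>U. \<forall>x\<in>V. \<forall>p \<beta> \<gamma>.
           ric chi gam A e m (frame chi gam A e m \<beta>) (frame chi gam A e m \<gamma>) (t, x, p) =
           (case (\<beta>, \<gamma>) of
              (Inl a, Inl b) \<Rightarrow> ricci_tensor chi t a b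
            | (Inr (Inl i), Inr (Inl j)) \<Rightarrow> ricci_tensor gam x i j
            | _ \<Rightarrow> 0)"
  by (simp only: cartan_canonical_connection.ric_adapted_frame fst_conv snd_conv simp_thms ball_triv)

end
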